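(* Let $\mathcal{G}$ be a quantitative concurrent graph game and $P=\langle\sigma_\alpha\rangle_{\alpha\in\Omega}$ a strategy profile. If $P$ is a Nash equilibrium, then the second-strike profile $\overline{P}$ obtained from $P$ is also a Nash equilibrium (and $\mathsf{outcome}(\overline{P})=\mathsf{outcome}(P)$).
   Context: A quantitative concurrent graph game (QCG) is a tuple $\mathcal{G}=\langle \Omega, V, \{\mathsf{Act}_\alpha\}_{\alpha\in\Omega}, v_0, \delta, \mathsf{cost}, F\rangle$: finite set of players $\Omega$, finite set of states $V$, finite action sets $\mathsf{Act}_\alpha$ (all enabled everywhere), initial state $v_0$, transition function $\delta: V\times\prod_\alpha\mathsf{Act}_\alpha\to V$, cost function assigning to each transition $(u,\vec a,\delta(u,\vec a))$ a vector $(\mathsf{cost}_\alpha)_{\alpha\in\Omega}\in\mathbb{N}^\Omega$, and target sets $F_\alpha\subseteq V$. An outcome from $u$ is a sequence of transitions $\tau_0\tau_1\cdots$, $\tau_i=(s_i,\vec a_i,t_i)$, $t_i=\delta(s_i,\vec a_i)$, $s_0=u$, $s_{i+1}=t_i$. $\mathsf{cost}_\alpha(\rho)$ is the sum of $\alpha$-costs along $\rho$ until $F_\alpha$ is first visited, and $\infty$ if $F_\alpha$ is never visited. A strategy of $\alpha$ maps histories (finite sequences of transitions) to $\mathsf{Act}_\alpha$; memoryless strategies depend only on the current state. A profile $P=\langle\sigma_\alpha\rangle_{\alpha\in\Omega}$ induces an outcome $\mathsf{outcome}(P)$ from $v_0$ ($\mathsf{outcome}_u(P)$ from $u$), and $\mathsf{cost}_\alpha(P)=\mathsf{cost}_\alpha(\mathsf{outcome}(P))$.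 $P$ is a Nash equilibrium (NE) if for every $\alpha$ and every strategy $\sigma'_\alpha$, $\mathsf{cost}_\alpha(P)\le\mathsf{cost}_\alpha(P[\alpha\gets\sigma'_\alpha])$, where $P[\alpha\gets\sigma'_\alpha]$ replaces $\alpha$'s strategy by $\sigma'_\alpha$. For $\alpha\in\Omega$ and $u\in V$, let $C_\alpha(u)=\max_\sigma\min_\tau\mathsf{cost}_\alpha(\mathsf{outcome}_u(\sigma,\tau))$, max over strategies $\sigma$ of the coalition $\Omega\setminus\{\alpha\}$ (tuples of strategies of all $\beta\ne\alpha$) and min over strategies $\tau$ of $\alpha$. For each $\alpha$ fix a memoryless coalition strategy $\chi^\alpha=(\chi^\alpha_\beta)_{\beta\neq\alpha}$ that is optimal for the coalition from every state, i.e. $\mathsf{cost}_\alpha(\mathsf{outcome}_u(\chi^\alpha,\tau))\ge C_\alpha(u)$ for all $u$ and all strategies $\tau$ of $\alpha$. Second-strike profile: given $P$ with outcome $\pi=(v_0,\vec a_0,v_1)(v_1,\vec a_1,v_2)\cdots$, the profile $\overline{P}=\langle\overline{\sigma_\beta}\rangle_\beta$ is defined by: Player $\beta$ plays according to $\sigma_\beta$ as long as all other players follow $\pi$; if at some time $i$ a player $\alpha\neq\beta$ deviates from $\pi$, so that instead of $(v_i,\vec a_i,v_{i+1})$ the transition $(v_i,\vec a',v')$ is taken, then from $v'$ on Player $\beta$ plays $\chi^\alpha_\beta$. *)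

theory Defs
  imports Main "HOL-Library.Extended_Nat"
begin

(* Players: finite type 'p (Omega = UNIV); states: finite type 'v;
   actions of player alpha: the set Act alpha :: 'a set.
   A transition is (source, action vector, target). *)
type_synonym ('v,'p,'a) trans = "'v \<times> ('p \<Rightarrow> 'a) \<times> 'v"

(* A strategy gets the start state of the play and the history (list of
   transitions taken so far) and returns an action. *)
type_synonym ('v,'p,'a) strat = "'v \<Rightarrow> ('v,'p,'a) trans list \<Rightarrow> 'a"

definition cur_state :: "'v \<Rightarrow> ('v,'p,'a) trans list \<Rightarrow> 'v" where
  "cur_state u h = (if h = [] then u else snd (snd (last h)))"

fun hist :: "('v \<Rightarrow> ('p \<Rightarrow> 'a) \<Rightarrow> 'v) \<Rightarrow> ('p \<Rightarrow> ('v,'p,'a) strat) \<Rightarrow> 'v \<Rightarrow> nat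
               \<Rightarrow> ('v,'p,'a) trans list" where
  "hist \<delta> P u 0 = []"
| "hist \<delta> P u (Suc n) =
     (let h = hist \<delta> P u n; s = cur_state u h; a = (\<lambda>\<beta>. P \<beta> u h)
      in h @ [(s, a, \<delta> s a)])"

definition outcome :: "('v \<Rightarrow> ('p \<Rightarrow> 'a) \<Rightarrow> 'v) \<Rightarrow> ('p \<Rightarrow> ('v,'p,'a) strat) \<Rightarrow> 'v
                       \<Rightarrow> nat \<Rightarrow> ('v,'p,'a) trans" where
  "outcome \<delta> P u n = hist \<delta> P u (Suc n) ! n"

(* cost_alpha of an outcome: sum of alpha-costs of transitions before F alpha is
   first visited; infinity if F alpha is never visited.
   cost s a alpha = alpha-cost of transition (s, a, delta s a). *)
definition path_cost :: "('v \<Rightarrow> ('p \<Rightarrow> 'a) \<Rightarrow> 'p \<Rightarrow> nat) \<Rightarrow> ('p \<Rightarrow> 'v set) \<Rightarrow> 'p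
                         \<Rightarrow> (nat \<Rightarrow> ('v,'p,'a) trans) \<Rightarrow> enat" where
  "path_cost cost F \<alpha> \<rho> =
     (if \<exists>i. fst (\<rho> i) \<in> F \<alpha>
      then enat (\<Sum>i < (LEAST i. fst (\<rho> i) \<in> F \<alpha>). cost (fst (\<rho> i)) (fst (snd (\<rho> i))) \<alpha>)
      else \<infinity>)"

definition valid_strat :: "('p \<Rightarrow> 'a set) \<Rightarrow> 'p \<Rightarrow> ('v,'p,'a) strat \<Rightarrow> bool" where
  "valid_strat Act \<alpha> \<sigma> \<longleftrightarrow> (\<forall>u h. \<sigma> u h \<in> Act \<alpha>)"

definition valid_profile :: "('p \<Rightarrow> 'a set) \<Rightarrow> ('p \<Rightarrow> ('v,'p,'a) strat) \<Rightarrow> bool" where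
  "valid_profile Act P \<longleftrightarrow> (\<forall>\<alpha>. valid_strat Act \<alpha> (P \<alpha>))"

definition is_NE :: "('p \<Rightarrow> 'a set) \<Rightarrow> ('v \<Rightarrow> ('p \<Rightarrow> 'a) \<Rightarrow> 'v) \<Rightarrow> ('v \<Rightarrow> ('p \<Rightarrow> 'a) \<Rightarrow> 'p \<Rightarrow> nat)
                     \<Rightarrow> ('p \<Rightarrow> 'v set) \<Rightarrow> 'v \<Rightarrow> ('p \<Rightarrow> ('v,'p,'a) strat) \<Rightarrow> bool" where
  "is_NE Act \<delta> cost F v0 P \<longleftrightarrow> valid_profile Act P \<and>
     (\<forall>\<alpha> \<sigma>'. valid_strat Act \<alpha> \<sigma>' \<longrightarrow>
        path_cost cost F \<alpha> (outcome \<delta> P v0) \<le> path_cost cost F \<alpha> (outcome \<delta> (P(\<alpha> := \<sigma>')) v0))"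

(* strategies of the coalition Omega - {alpha}: the alpha component is irrelevant
   (it is always overwritten) *)
definition coalition_strats :: "('p \<Rightarrow> 'a set) \<Rightarrow> 'p \<Rightarrow> ('p \<Rightarrow> ('v,'p,'a) strat) set" where
  "coalition_strats Act \<alpha> = {\<sigma>. \<forall>\<beta>. \<beta> \<noteq> \<alpha> \<longrightarrow> valid_strat Act \<beta> (\<sigma> \<beta>)}"

definition Cval :: "('p \<Rightarrow> 'a set) \<Rightarrow> ('v \<Rightarrow> ('p \<Rightarrow> 'a) \<Rightarrow> 'v) \<Rightarrow> ('v \<Rightarrow> ('p \<Rightarrow> 'a) \<Rightarrow> 'p \<Rightarrow> nat)
                    \<Rightarrow> ('p \<Rightarrow> 'v set) \<Rightarrow> 'p \<Rightarrow> 'v \<Rightarrow> enat" where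
  "Cval Act \<delta> cost F \<alpha> u =
     (SUP \<sigma> \<in> coalition_strats Act \<alpha>. INF \<tau> \<in> {\<tau>. valid_strat Act \<alpha> \<tau>}.
        path_cost cost F \<alpha> (outcome \<delta> (\<sigma>(\<alpha> := \<tau>)) u))"

definition memoryless :: "('v \<Rightarrow> 'a) \<Rightarrow> ('v,'p,'a) strat" where
  "memoryless f = (\<lambda>u h. f (cur_state u h))"

definition optimal_coalition :: "('p \<Rightarrow> 'a set) \<Rightarrow> ('v \<Rightarrow> ('p \<Rightarrow> 'a) \<Rightarrow> 'v) \<Rightarrow> ('v \<Rightarrow> ('p \<Rightarrow> 'a) \<Rightarrow> 'p \<Rightarrow> nat)
                    \<Rightarrow> ('p \<Rightarrow> 'v set) \<Rightarrow> ('p \<Rightarrow> 'p \<Rightarrow> 'v \<Rightarrow> 'a) \<Rightarrow> bool" where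
  "optimal_coalition Act \<delta> cost F \<chi> \<longleftrightarrow>
     (\<forall>\<alpha> \<beta> v. \<beta> \<noteq> \<alpha> \<longrightarrow> \<chi> \<alpha> \<beta> v \<in> Act \<beta>) \<and>
     (\<forall>\<alpha> u \<tau>. valid_strat Act \<alpha> \<tau> \<longrightarrow>
        path_cost cost F \<alpha> (outcome \<delta> ((\<lambda>\<beta>. memoryless (\<chi> \<alpha> \<beta>))(\<alpha> := \<tau>)) u)
          \<ge> Cval Act \<delta> cost F \<alpha> u)"

(* In all other cases (history
   follows pi, or other situations not covered by the paper) beta plays sigma_beta. *)
definition second_strike :: "('v \<Rightarrow> ('p \<Rightarrow> 'a) \<Rightarrow> 'v) \<Rightarrow> ('p \<Rightarrow> 'p \<Rightarrow> 'v \<Rightarrow> 'a) \<Rightarrow> 'v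
                             \<Rightarrow> ('p \<Rightarrow> ('v,'p,'a) strat) \<Rightarrow> ('p \<Rightarrow> ('v,'p,'a) strat)" where
  "second_strike \<delta> \<chi> v0 P = (\<lambda>\<beta> u h.
     (let \<pi> = outcome \<delta> P v0 in
      if u = v0 \<and> (\<exists>i < length h. h ! i \<noteq> \<pi> i) then
        (let i = (LEAST i. i < length h \<and> h ! i \<noteq> \<pi> i);
             D = {\<gamma>. fst (snd (h ! i)) \<gamma> \<noteq> fst (snd (\<pi> i)) \<gamma>}
         in if (\<exists>\<alpha>. D = {\<alpha>} \<and> \<alpha> \<noteq> \<beta>) then \<chi> (the_elem D) \<beta> (cur_state u h)
            else P \<beta> u h)
      else P \<beta> u h))"

end

(* Suppose Player alpha deviates from the second-strike profile and the play first leaves the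
   outcome pi of P at step i. Since the other players still see a history on pi, only alpha's
   action differs there, so from the next state v' on they play the optimal coalition strategy
   against alpha, and alpha pays at least the cost c of the first i+1 steps plus C_alpha(v').
   In P, on the other hand, alpha could take the same first i+1 steps and then play a best
   response to the remainder of P, which costs at most C_alpha(v'); as P is a Nash
   equilibrium, alpha's cost on pi is at most c + C_alpha(v') as well. *)

theory Submission
  imports Defs
begin

lemma length_hist [simp]: "length (hist \<delta> P u n) = n"
  by (induction n) (simp_all add: Let_def)

lemma hist_Suc: "hist \<delta> P u (Suc n) = hist \<delta> P u n @ [outcome \<delta> P u n]"
  by (simp add: outcome_def Let_def nth_append)

lemma outcome_eq:
  "outcome \<delta> P u n =
    (let h = hist \<delta> P u n; s = cur_state u h; a = (\<lambda>\<beta>. P \<beta> u h) in (s, a, \<delta> s a))"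
  by (simp add: outcome_def Let_def nth_append)

declare hist.simps(2) [simp del]

lemma hist_eq_map: "hist \<delta> P u n = map (outcome \<delta> P u) [0..<n]"
  by (induction n) (simp_all add: hist_Suc)

lemma nth_hist: "k < n \<Longrightarrow> hist \<delta> P u n ! k = outcome \<delta> P u k"
  by (simp add: hist_eq_map)

lemma hist_eq_iff:
  "hist \<delta> P u n = hist \<delta> Q u n \<longleftrightarrow> (\<forall>j<n. outcome \<delta> P u j = outcome \<delta> Q u j)"
  by (auto simp: hist_eq_map simp del: upt_Suc)

lemma hist_cong:
  assumes "\<And>m \<beta>. m < n \<Longrightarrow> P \<beta> u (hist \<delta> P u m) = Q \<beta> u (hist \<delta> P u m)"
  shows "hist \<delta> P u n = hist \<delta> Q u n"
  using assms
proof (induction n)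
  case 0
  show ?case by simp
next
  case (Suc n)
  then have "hist \<delta> P u n = hist \<delta> Q u n" by simp
  moreover have "(\<lambda>\<beta>. P \<beta> u (hist \<delta> P u n)) = (\<lambda>\<beta>. Q \<beta> u (hist \<delta> P u n))"
    using Suc.prems by auto
  ultimately show ?case by (simp add: Let_def hist.simps(2))
qed

lemma cur_state_append: "cur_state u (h @ h') = cur_state (cur_state u h) h'"
  by (simp add: cur_state_def)

lemma hist_add:
  assumes "\<And>\<beta> h'. Q \<beta> (cur_state u (hist \<delta> P u k)) h' = P \<beta> u (hist \<delta> P u k @ h')"
  shows "hist \<delta> P u (k + n) = hist \<delta> P u k @ hist \<delta> Q (cur_state u (hist \<delta> P u k)) n"
proof (induction n)
  case 0
  show ?case by simp
next
  case (Suc n)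
  have "outcome \<delta> P u (k + n) = outcome \<delta> Q (cur_state u (hist \<delta> P u k)) n"
    unfolding outcome_eq Suc assms by (simp add: Let_def cur_state_append)
  with Suc show ?case by (simp add: hist_Suc)
qed

lemma outcome_add:
  assumes "\<And>\<beta> h'. Q \<beta> (cur_state u (hist \<delta> P u k)) h' = P \<beta> u (hist \<delta> P u k @ h')"
  shows "outcome \<delta> P u (k + n) = outcome \<delta> Q (cur_state u (hist \<delta> P u k)) n"
proof -
  have "outcome \<delta> P u (k + n) = hist \<delta> P u (k + Suc n) ! (k + n)"
    by (simp add: nth_hist)
  also have "\<dots> = outcome \<delta> Q (cur_state u (hist \<delta> P u k)) n"
    unfolding hist_add[where Q=Q, OF assms] by (simp add: nth_append nth_hist)
  finally show ?thesis .
qed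

definition prefix_cost :: "('v \<Rightarrow> ('p \<Rightarrow> 'a) \<Rightarrow> 'p \<Rightarrow> nat) \<Rightarrow> 'p
                           \<Rightarrow> (nat \<Rightarrow> ('v,'p,'a) trans) \<Rightarrow> nat \<Rightarrow> nat" where
  "prefix_cost cost \<alpha> \<rho> k = (\<Sum>j<k. cost (fst (\<rho> j)) (fst (snd (\<rho> j))) \<alpha>)"

lemma prefix_cost_cong:
  "(\<And>j. j < k \<Longrightarrow> \<rho> j = \<rho>' j) \<Longrightarrow> prefix_cost cost \<alpha> \<rho> k = prefix_cost cost \<alpha> \<rho>' k"
  by (simp add: prefix_cost_def)

lemma prefix_cost_add:
  "prefix_cost cost \<alpha> \<rho> (k + m) = prefix_cost cost \<alpha> \<rho> k + prefix_cost cost \<alpha> (\<lambda>n. \<rho> (k + n)) m"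
  by (induction m) (simp_all add: prefix_cost_def)

lemma path_cost_eq:
  "path_cost cost F \<alpha> \<rho> =
    (if \<exists>i. fst (\<rho> i) \<in> F \<alpha> then enat (prefix_cost cost \<alpha> \<rho> (LEAST i. fst (\<rho> i) \<in> F \<alpha>)) else \<infinity>)"
  by (simp add: path_cost_def prefix_cost_def)

lemma path_cost_split:
  assumes "\<forall>j<k. fst (\<rho> j) \<notin> F \<alpha>"
  shows "path_cost cost F \<alpha> \<rho> = enat (prefix_cost cost \<alpha> \<rho> k) + path_cost cost F \<alpha> (\<lambda>n. \<rho> (k + n))"
proof (cases "\<exists>i. fst (\<rho> i) \<in> F \<alpha>")
  case True
  let ?L = "LEAST i. fst (\<rho> i) \<in> F \<alpha>" and ?M = "LEAST n. fst (\<rho> (k + n)) \<in> F \<alpha>"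
  have L: "fst (\<rho> ?L) \<in> F \<alpha>" using True by (rule LeastI_ex)
  with assms have "k \<le> ?L" by (meson not_le)
  with L have shifted: "\<exists>n. fst (\<rho> (k + n)) \<in> F \<alpha>" by (metis le_add_diff_inverse)
  have M: "fst (\<rho> (k + ?M)) \<in> F \<alpha>" using shifted by (rule LeastI_ex)
  have "?M \<le> ?L - k" using L \<open>k \<le> ?L\<close> by (intro Least_le) simp
  moreover have "?L \<le> k + ?M" using M by (rule Least_le)
  ultimately have "?L = k + ?M" using \<open>k \<le> ?L\<close> by linarith
  then show ?thesis using True shifted by (simp add: path_cost_eq prefix_cost_add)
next
  case False
  then show ?thesis by (simp add: path_cost_eq)
qed

lemma path_cost_cong_reached:
  assumes "j0 \<le> i" "fst (\<rho> j0) \<in> F \<alpha>" "\<forall>j<i. \<rho> j = \<rho>' j" "fst (\<rho> i) = fst (\<rho>' i)"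
  shows "path_cost cost F \<alpha> \<rho> = path_cost cost F \<alpha> \<rho>'"
proof -
  have src: "\<forall>j\<le>i. fst (\<rho> j) = fst (\<rho>' j)" using assms(3,4) by (auto simp: le_less)
  let ?L = "LEAST i. fst (\<rho> i) \<in> F \<alpha>" and ?L' = "LEAST i. fst (\<rho>' i) \<in> F \<alpha>"
  have reached: "\<exists>j. fst (\<rho> j) \<in> F \<alpha>" "\<exists>j. fst (\<rho>' j) \<in> F \<alpha>"
    using assms(1,2) src by metis+
  have "?L' \<le> j0" using assms(1,2) src by (intro Least_le) auto
  have "?L = ?L'"
  proof (rule Least_equality)
    show "fst (\<rho> ?L') \<in> F \<alpha>"
      using LeastI_ex[OF reached(2)] \<open>?L' \<le> j0\<close> assms(1) src by auto
    show "\<And>y. fst (\<rho> y) \<in> F \<alpha> \<Longrightarrow> ?L' \<le> y"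
      using \<open>?L' \<le> j0\<close> assms(1) src by (metis Least_le le_trans nat_le_linear)
  qed
  moreover have "prefix_cost cost \<alpha> \<rho> ?L' = prefix_cost cost \<alpha> \<rho>' ?L'"
    using \<open>?L' \<le> j0\<close> assms(1,3) by (intro prefix_cost_cong) auto
  ultimately show ?thesis using reached by (simp add: path_cost_eq)
qed

lemma best_response_le_Cval:
  fixes S :: "'p \<Rightarrow> ('v,'p,'a) strat" and \<tau> :: "('v,'p,'a) strat"
  assumes "S \<in> coalition_strats Act \<alpha>" and "valid_strat Act \<alpha> \<tau>"
  obtains \<tau>0 where "valid_strat Act \<alpha> \<tau>0"
    and "path_cost cost F \<alpha> (outcome \<delta> (S(\<alpha> := \<tau>0)) u) \<le> Cval Act \<delta> cost F \<alpha> u"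
proof -
  define T where "T = {\<tau> :: ('v,'p,'a) strat. valid_strat Act \<alpha> \<tau>}"
  define f where "f = (\<lambda>\<tau>. path_cost cost F \<alpha> (outcome \<delta> (S(\<alpha> := \<tau>)) u))"
  \<comment> \<open>infima of \<open>enat\<close> values are attained, so no finiteness of the action sets is needed\<close>
  have "Inf (f ` T) \<in> f ` T"
    unfolding Inf_enat_def using assms(2) by (auto simp: T_def intro: LeastI)
  then obtain \<tau>0 where "\<tau>0 \<in> T" and "f \<tau>0 = Inf (f ` T)" by auto
  moreover have "Inf (f ` T) \<le> Cval Act \<delta> cost F \<alpha> u"
    unfolding Cval_def f_def T_def using assms(1) by (rule SUP_upper)
  ultimately show thesis using that by (simp add: T_def f_def)
qed

lemma NE_cost_le_prefix_cost_plus_Cval: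
  fixes P :: "'p \<Rightarrow> ('v,'p,'a) strat"
  assumes NE: "is_NE Act \<delta> cost F v0 P" and \<sigma>': "valid_strat Act \<alpha> \<sigma>'"
    and not_reached: "\<forall>j<k. fst (outcome \<delta> (P(\<alpha> := \<sigma>')) v0 j) \<notin> F \<alpha>"
  shows "path_cost cost F \<alpha> (outcome \<delta> P v0)
    \<le> enat (prefix_cost cost \<alpha> (outcome \<delta> (P(\<alpha> := \<sigma>')) v0) k)
       + Cval Act \<delta> cost F \<alpha> (cur_state v0 (hist \<delta> (P(\<alpha> := \<sigma>')) v0 k))"
proof -
  define H where "H = hist \<delta> (P(\<alpha> := \<sigma>')) v0 k"
  define v' where "v' = cur_state v0 H"
  define S where "S = (\<lambda>\<beta> (u::'v) h. P \<beta> v0 (H @ h))"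
  have valid: "valid_profile Act P" using NE by (simp add: is_NE_def)
  then have "S \<in> coalition_strats Act \<alpha>"
    by (simp add: coalition_strats_def S_def valid_profile_def valid_strat_def)
  then obtain \<tau> where \<tau>: "valid_strat Act \<alpha> \<tau>"
    and best: "path_cost cost F \<alpha> (outcome \<delta> (S(\<alpha> := \<tau>)) v') \<le> Cval Act \<delta> cost F \<alpha> v'"
    using valid best_response_le_Cval by (metis valid_profile_def)
  \<comment> \<open>follow \<open>\<sigma>'\<close> for \<open>k\<close> steps, then a best response to the remainder of \<open>P\<close>\<close>
  define \<sigma>'' where
    "\<sigma>'' = (\<lambda>u h. if k \<le> length h \<and> take k h = H then \<tau> v' (drop k h) else \<sigma>' u h)"
  have "valid_strat Act \<alpha> \<sigma>''"
    using \<sigma>' \<tau> by (simp add: valid_strat_def \<sigma>''_def)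
  then have "path_cost cost F \<alpha> (outcome \<delta> P v0)
      \<le> path_cost cost F \<alpha> (outcome \<delta> (P(\<alpha> := \<sigma>'')) v0)"
    using NE by (simp add: is_NE_def)
  also have "\<dots> = enat (prefix_cost cost \<alpha> (outcome \<delta> (P(\<alpha> := \<sigma>')) v0) k)
        + path_cost cost F \<alpha> (outcome \<delta> (S(\<alpha> := \<tau>)) v')"
  proof -
    have hist_k: "hist \<delta> (P(\<alpha> := \<sigma>'')) v0 k = H"
      unfolding H_def by (rule hist_cong) (simp add: \<sigma>''_def)
    then have prefix: "\<forall>j<k. outcome \<delta> (P(\<alpha> := \<sigma>'')) v0 j = outcome \<delta> (P(\<alpha> := \<sigma>')) v0 j"
      unfolding H_def hist_eq_iff .
    have "length H = k" by (simp add: H_def)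
    then have "(S(\<alpha> := \<tau>)) \<beta> v' h = (P(\<alpha> := \<sigma>'')) \<beta> v0 (H @ h)" for \<beta> h
      by (simp add: S_def \<sigma>''_def)
    then have "outcome \<delta> (P(\<alpha> := \<sigma>'')) v0 (k + n) = outcome \<delta> (S(\<alpha> := \<tau>)) v' n" for n
      using outcome_add[where Q="S(\<alpha> := \<tau>)" and P="P(\<alpha> := \<sigma>'')" and u=v0 and k=k]
      by (simp add: hist_k v'_def)
    moreover have "\<forall>j<k. fst (outcome \<delta> (P(\<alpha> := \<sigma>'')) v0 j) \<notin> F \<alpha>"
      using not_reached prefix by simp
    moreover have "prefix_cost cost \<alpha> (outcome \<delta> (P(\<alpha> := \<sigma>'')) v0) k
        = prefix_cost cost \<alpha> (outcome \<delta> (P(\<alpha> := \<sigma>')) v0) k"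
      using prefix by (intro prefix_cost_cong) simp
    ultimately show ?thesis
      using path_cost_split[where \<rho>="outcome \<delta> (P(\<alpha> := \<sigma>'')) v0" and k=k and F=F and \<alpha>=\<alpha>]
      by simp
  qed
  also have "\<dots> \<le> enat (prefix_cost cost \<alpha> (outcome \<delta> (P(\<alpha> := \<sigma>')) v0) k) + Cval Act \<delta> cost F \<alpha> v'"
    using best by (rule add_left_mono)
  finally show ?thesis by (simp add: v'_def H_def)
qed

lemma prefix_cost_plus_Cval_le_punished_cost:
  fixes R :: "'p \<Rightarrow> ('v,'p,'a) strat"
  assumes opt: "optimal_coalition Act \<delta> cost F \<chi>" and valid: "valid_strat Act \<alpha> (R \<alpha>)"
    and punish: "\<And>\<beta> h. \<beta> \<noteq> \<alpha> \<Longrightarrow>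
      R \<beta> u (hist \<delta> R u k @ h) = \<chi> \<alpha> \<beta> (cur_state u (hist \<delta> R u k @ h))"
    and not_reached: "\<forall>j<k. fst (outcome \<delta> R u j) \<notin> F \<alpha>"
  shows "enat (prefix_cost cost \<alpha> (outcome \<delta> R u) k) + Cval Act \<delta> cost F \<alpha> (cur_state u (hist \<delta> R u k))
    \<le> path_cost cost F \<alpha> (outcome \<delta> R u)"
proof -
  define H where "H = hist \<delta> R u k"
  define v' where "v' = cur_state u H"
  define \<tau> where "\<tau> = (\<lambda>(w::'v) h. R \<alpha> u (H @ h))"
  define Q where "Q = (\<lambda>\<beta>. memoryless (\<chi> \<alpha> \<beta>))(\<alpha> := \<tau>)"
  have "valid_strat Act \<alpha> \<tau>" using valid by (simp add: valid_strat_def \<tau>_def)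
  with opt have "Cval Act \<delta> cost F \<alpha> v' \<le> path_cost cost F \<alpha> (outcome \<delta> Q v')"
    by (simp add: optimal_coalition_def Q_def)
  moreover have "outcome \<delta> R u (k + n) = outcome \<delta> Q v' n" for n
    using outcome_add[where Q=Q and P=R and u=u and k=k] punish
    by (simp add: Q_def \<tau>_def memoryless_def v'_def H_def cur_state_append)
  then have "path_cost cost F \<alpha> (outcome \<delta> R u)
      = enat (prefix_cost cost \<alpha> (outcome \<delta> R u) k) + path_cost cost F \<alpha> (outcome \<delta> Q v')"
    using path_cost_split[where \<rho>="outcome \<delta> R u" and k=k and F=F and \<alpha>=\<alpha>, OF not_reached] by simp
  ultimately show ?thesis by (simp add: H_def v'_def add_left_mono)
qed

lemma second_strike_on_play:
  "second_strike \<delta> \<chi> v0 P \<beta> u (hist \<delta> P v0 n) = P \<beta> u (hist \<delta> P v0 n)"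
  by (auto simp: second_strike_def Let_def nth_hist)

lemma second_strike_after_deviation:
  assumes "i < length h" "\<forall>j<i. h ! j = outcome \<delta> P v0 j" "h ! i \<noteq> outcome \<delta> P v0 i"
    and "{\<gamma>. fst (snd (h ! i)) \<gamma> \<noteq> fst (snd (outcome \<delta> P v0 i)) \<gamma>} = {\<alpha>}" "\<beta> \<noteq> \<alpha>"
  shows "second_strike \<delta> \<chi> v0 P \<beta> v0 h = \<chi> \<alpha> \<beta> (cur_state v0 h)"
proof -
  have "(LEAST i. i < length h \<and> h ! i \<noteq> outcome \<delta> P v0 i) = i"
  proof (rule Least_equality)
    show "i < length h \<and> h ! i \<noteq> outcome \<delta> P v0 i" using assms by simp
    show "\<And>j. j < length h \<and> h ! j \<noteq> outcome \<delta> P v0 j \<Longrightarrow> i \<le> j"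
      using assms(2) by (meson not_le)
  qed
  with assms show ?thesis by (auto simp: second_strike_def Let_def)
qed

lemma outcome_second_strike: "outcome \<delta> (second_strike \<delta> \<chi> v0 P) v0 = outcome \<delta> P v0"
proof -
  have "hist \<delta> P v0 n = hist \<delta> (second_strike \<delta> \<chi> v0 P) v0 n" for n
    by (rule hist_cong) (simp add: second_strike_on_play)
  then show ?thesis by (simp add: outcome_def fun_eq_iff)
qed

lemma valid_profile_second_strike:
  assumes "valid_profile Act P" and "\<forall>\<alpha> \<beta> v. \<beta> \<noteq> \<alpha> \<longrightarrow> \<chi> \<alpha> \<beta> v \<in> Act \<beta>"
  shows "valid_profile Act (second_strike \<delta> \<chi> v0 P)"
  using assms by (auto simp: valid_profile_def valid_strat_def second_strike_def Let_def)

lemma hist_second_strike_before_deviation: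
  assumes "\<forall>j<i. outcome \<delta> ((second_strike \<delta> \<chi> v0 P)(\<alpha> := \<sigma>')) v0 j = outcome \<delta> P v0 j"
  shows "hist \<delta> ((second_strike \<delta> \<chi> v0 P)(\<alpha> := \<sigma>')) v0 (Suc i) = hist \<delta> (P(\<alpha> := \<sigma>')) v0 (Suc i)"
proof (rule hist_cong)
  fix m \<beta> assume "m < Suc i"
  with assms have "hist \<delta> ((second_strike \<delta> \<chi> v0 P)(\<alpha> := \<sigma>')) v0 m = hist \<delta> P v0 m"
    by (simp add: hist_eq_iff)
  then show "((second_strike \<delta> \<chi> v0 P)(\<alpha> := \<sigma>')) \<beta> v0 (hist \<delta> ((second_strike \<delta> \<chi> v0 P)(\<alpha> := \<sigma>')) v0 m)
      = (P(\<alpha> := \<sigma>')) \<beta> v0 (hist \<delta> ((second_strike \<delta> \<chi> v0 P)(\<alpha> := \<sigma>')) v0 m)"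
    by (simp add: second_strike_on_play)
qed

lemma second_strike_punishes_first_deviation:
  fixes P :: "'p \<Rightarrow> ('v,'p,'a) strat" and \<delta> \<chi> v0 \<alpha> \<sigma>'
  defines "R \<equiv> (second_strike \<delta> \<chi> v0 P)(\<alpha> := \<sigma>')"
  assumes before: "\<forall>j<i. outcome \<delta> R v0 j = outcome \<delta> P v0 j"
    and deviation: "outcome \<delta> R v0 i \<noteq> outcome \<delta> P v0 i" and "\<beta> \<noteq> \<alpha>"
  shows "R \<beta> v0 (hist \<delta> R v0 (Suc i) @ h) = \<chi> \<alpha> \<beta> (cur_state v0 (hist \<delta> R v0 (Suc i) @ h))"
proof -
  let ?H = "hist \<delta> P v0 i"
  have "hist \<delta> R v0 i = ?H" using before by (simp add: hist_eq_iff)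
  then have R_i: "outcome \<delta> R v0 i
      = (cur_state v0 ?H, \<lambda>\<gamma>. R \<gamma> v0 ?H, \<delta> (cur_state v0 ?H) (\<lambda>\<gamma>. R \<gamma> v0 ?H))"
    by (simp add: outcome_eq[of \<delta> R] Let_def)
  have P_i: "outcome \<delta> P v0 i
      = (cur_state v0 ?H, \<lambda>\<gamma>. P \<gamma> v0 ?H, \<delta> (cur_state v0 ?H) (\<lambda>\<gamma>. P \<gamma> v0 ?H))"
    by (simp add: outcome_eq[of \<delta> P] Let_def)
  have others: "R \<gamma> v0 ?H = P \<gamma> v0 ?H" if "\<gamma> \<noteq> \<alpha>" for \<gamma>
    using that by (simp add: R_def second_strike_on_play)
  have "R \<alpha> v0 ?H \<noteq> P \<alpha> v0 ?H"
  proof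
    assume "R \<alpha> v0 ?H = P \<alpha> v0 ?H"
    with others have "(\<lambda>\<gamma>. R \<gamma> v0 ?H) = (\<lambda>\<gamma>. P \<gamma> v0 ?H)" by (metis ext)
    with deviation R_i P_i show False by simp
  qed
  with others have actions:
    "{\<gamma>. fst (snd (outcome \<delta> R v0 i)) \<gamma> \<noteq> fst (snd (outcome \<delta> P v0 i)) \<gamma>} = {\<alpha>}"
    using R_i P_i by auto
  let ?h = "hist \<delta> R v0 (Suc i) @ h"
  have "R \<beta> v0 ?h = second_strike \<delta> \<chi> v0 P \<beta> v0 ?h"
    using \<open>\<beta> \<noteq> \<alpha>\<close> by (simp add: R_def)
  also have "\<dots> = \<chi> \<alpha> \<beta> (cur_state v0 ?h)"
    by (rule second_strike_after_deviation[where i=i])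
      (use before deviation actions \<open>\<beta> \<noteq> \<alpha>\<close> in \<open>auto simp: nth_append nth_hist\<close>)
  finally show ?thesis .
qed

lemma second_strike_first_deviation_unprofitable:
  fixes P :: "'p \<Rightarrow> ('v,'p,'a) strat" and \<delta> \<chi> v0 \<alpha> \<sigma>'
  defines "R \<equiv> (second_strike \<delta> \<chi> v0 P)(\<alpha> := \<sigma>')"
  assumes NE: "is_NE Act \<delta> cost F v0 P" and opt: "optimal_coalition Act \<delta> cost F \<chi>"
    and \<sigma>': "valid_strat Act \<alpha> \<sigma>'"
    and before: "\<forall>j<i. outcome \<delta> R v0 j = outcome \<delta> P v0 j"
    and deviation: "outcome \<delta> R v0 i \<noteq> outcome \<delta> P v0 i"
  shows "path_cost cost F \<alpha> (outcome \<delta> P v0) \<le> path_cost cost F \<alpha> (outcome \<delta> R v0)"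
proof -
  let ?\<pi> = "outcome \<delta> P v0" and ?\<rho> = "outcome \<delta> R v0"
  have hist_dev: "hist \<delta> R v0 (Suc i) = hist \<delta> (P(\<alpha> := \<sigma>')) v0 (Suc i)"
    unfolding R_def by (rule hist_second_strike_before_deviation) (use before in \<open>simp add: R_def\<close>)
  then have same_prefix: "\<forall>j<Suc i. ?\<rho> j = outcome \<delta> (P(\<alpha> := \<sigma>')) v0 j"
    unfolding hist_eq_iff .
  show ?thesis
  proof (cases "\<exists>j\<le>i. fst (?\<rho> j) \<in> F \<alpha>")
    case True
    then obtain j0 where "j0 \<le> i" "fst (?\<rho> j0) \<in> F \<alpha>" by blast
    moreover have "fst (?\<rho> i) = fst (?\<pi> i)"
    proof -
      have "hist \<delta> R v0 i = hist \<delta> P v0 i" using before by (simp add: hist_eq_iff)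
      then show ?thesis by (simp add: outcome_eq[of \<delta> R] outcome_eq[of \<delta> P] Let_def)
    qed
    ultimately have "path_cost cost F \<alpha> ?\<rho> = path_cost cost F \<alpha> ?\<pi>"
      using before by (intro path_cost_cong_reached)
    then show ?thesis by simp
  next
    case False
    then have not_reached: "\<forall>j<Suc i. fst (?\<rho> j) \<notin> F \<alpha>" by (simp add: less_Suc_eq_le)
    have punish: "R \<beta> v0 (hist \<delta> R v0 (Suc i) @ h) = \<chi> \<alpha> \<beta> (cur_state v0 (hist \<delta> R v0 (Suc i) @ h))"
      if "\<beta> \<noteq> \<alpha>" for \<beta> h
      using second_strike_punishes_first_deviation[of i \<delta> \<chi> v0 P \<alpha> \<sigma>' \<beta> h] before deviation that
      unfolding R_def by blast
    have "path_cost cost F \<alpha> ?\<pi>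
        \<le> enat (prefix_cost cost \<alpha> (outcome \<delta> (P(\<alpha> := \<sigma>')) v0) (Suc i))
          + Cval Act \<delta> cost F \<alpha> (cur_state v0 (hist \<delta> (P(\<alpha> := \<sigma>')) v0 (Suc i)))"
      using NE \<sigma>' not_reached same_prefix by (intro NE_cost_le_prefix_cost_plus_Cval) auto
    also have "prefix_cost cost \<alpha> (outcome \<delta> (P(\<alpha> := \<sigma>')) v0) (Suc i) = prefix_cost cost \<alpha> ?\<rho> (Suc i)"
      using same_prefix by (intro prefix_cost_cong) simp
    also have "enat (prefix_cost cost \<alpha> ?\<rho> (Suc i))
        + Cval Act \<delta> cost F \<alpha> (cur_state v0 (hist \<delta> (P(\<alpha> := \<sigma>')) v0 (Suc i)))
        \<le> path_cost cost F \<alpha> ?\<rho>"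
      unfolding hist_dev[symmetric] using opt \<sigma>' punish not_reached
      by (intro prefix_cost_plus_Cval_le_punished_cost) (simp_all add: R_def)
    finally show ?thesis .
  qed
qed

lemma second_strike_deviation_unprofitable:
  fixes P :: "'p \<Rightarrow> ('v,'p,'a) strat"
  assumes NE: "is_NE Act \<delta> cost F v0 P" and opt: "optimal_coalition Act \<delta> cost F \<chi>"
    and \<sigma>': "valid_strat Act \<alpha> \<sigma>'"
  shows "path_cost cost F \<alpha> (outcome \<delta> P v0)
    \<le> path_cost cost F \<alpha> (outcome \<delta> ((second_strike \<delta> \<chi> v0 P)(\<alpha> := \<sigma>')) v0)"
    (is "_ \<le> path_cost cost F \<alpha> ?\<rho>")
proof (cases "\<exists>n. ?\<rho> n \<noteq> outcome \<delta> P v0 n")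
  case False
  then have "?\<rho> = outcome \<delta> P v0" by auto
  then show ?thesis by simp
next
  case True
  define i where "i = (LEAST n. ?\<rho> n \<noteq> outcome \<delta> P v0 n)"
  have "?\<rho> i \<noteq> outcome \<delta> P v0 i" using True unfolding i_def by (rule LeastI_ex)
  moreover have "\<forall>j<i. ?\<rho> j = outcome \<delta> P v0 j" unfolding i_def using not_less_Least by blast
  ultimately show ?thesis using NE opt \<sigma>' by (intro second_strike_first_deviation_unprofitable)
qed

theorem lemma1:
  fixes Act :: "'p::finite \<Rightarrow> 'a set"
    and \<delta> :: "'v::finite \<Rightarrow> ('p \<Rightarrow> 'a) \<Rightarrow> 'v"
    and cost :: "'v \<Rightarrow> ('p \<Rightarrow> 'a) \<Rightarrow> 'p \<Rightarrow> nat"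
    and F :: "'p \<Rightarrow> 'v set"
    and v0 :: 'v
    and \<chi> :: "'p \<Rightarrow> 'p \<Rightarrow> 'v \<Rightarrow> 'a"
    and P :: "'p \<Rightarrow> ('v,'p,'a) strat"
  assumes "\<And>\<alpha>. finite (Act \<alpha>)"
    and "\<And>\<alpha>. Act \<alpha> \<noteq> {}"
    and "optimal_coalition Act \<delta> cost F \<chi>"
    and "is_NE Act \<delta> cost F v0 P"
  shows "is_NE Act \<delta> cost F v0 (second_strike \<delta> \<chi> v0 P)
         \<and> outcome \<delta> (second_strike \<delta> \<chi> v0 P) v0 = outcome \<delta> P v0"
proof -
  have "valid_profile Act P" using assms(4) by (simp add: is_NE_def)
  moreover have "\<forall>\<alpha> \<beta> v. \<beta> \<noteq> \<alpha> \<longrightarrow> \<chi> \<alpha> \<beta> v \<in> Act \<beta>"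
    using assms(3) by (simp add: optimal_coalition_def)
  ultimately have "valid_profile Act (second_strike \<delta> \<chi> v0 P)"
    by (rule valid_profile_second_strike)
  moreover have "path_cost cost F \<alpha> (outcome \<delta> (second_strike \<delta> \<chi> v0 P) v0)
      \<le> path_cost cost F \<alpha> (outcome \<delta> ((second_strike \<delta> \<chi> v0 P)(\<alpha> := \<sigma>')) v0)"
    if "valid_strat Act \<alpha> \<sigma>'" for \<alpha> \<sigma>'
    using second_strike_deviation_unprofitable[OF assms(4,3) that] by (simp add: outcome_second_strike)
  ultimately show ?thesis by (simp add: is_NE_def outcome_second_strike)
qed

end
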